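(* Let $K$ be an algebraically closed field and $\varphi:V\to V$ a $K$-linear map of a finite dimensional $K$-vector space $V$. Let $\{\lambda_1,\dots,\lambda_p\}\subseteq K$ be the set of all ($p$ distinct) eigenvalues of $\varphi$ and $m=\max\{\dim(\ker(\varphi-\lambda_i1_V))\mid1\le i\le p\}$. Then the centralizer $C_\varphi=\{\psi\in\mathrm{Hom}_K(V,V)\mid\psi\circ\varphi=\varphi\circ\psi\}$ satisfies all polynomial identities of the full matrix algebra $M_{m\times m}(K[t])$.
   Context: $K[t]$ is the polynomial ring over $K$ in one indeterminate. *)

theory Defs
  imports "Jordan_Normal_Form.Jordan_Normal_Form_Uniqueness"
begin

text \<open>Noncommutative polynomials over K in the variables x_0, x_1, ... (elements of the
free associative K-algebra), represented by expressions. Two expressions denoting the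
same element of the free algebra evaluate identically in every K-algebra, so the set of
expressions vanishing identically on an algebra determines its T-ideal of identities.\<close>

datatype 'a ncpoly =
    NVar nat
  | NConst 'a
  | NAdd "'a ncpoly" "'a ncpoly"
  | NSub "'a ncpoly" "'a ncpoly"
  | NMul "'a ncpoly" "'a ncpoly"

text \<open>Evaluation in the algebra of d x d matrices over a ring 'b which is a K-algebra
via the scalar embedding emb; constants c act as emb c times the identity matrix.\<close>

fun eval_ncpoly :: "nat \<Rightarrow> ('a \<Rightarrow> 'b::comm_ring_1) \<Rightarrow> (nat \<Rightarrow> 'b mat) \<Rightarrow> 'a ncpoly \<Rightarrow> 'b mat" where
  "eval_ncpoly d emb \<rho> (NVar i) = \<rho> i"
| "eval_ncpoly d emb \<rho> (NConst c) = emb c \<cdot>\<^sub>m 1\<^sub>m d"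
| "eval_ncpoly d emb \<rho> (NAdd p q) = eval_ncpoly d emb \<rho> p + eval_ncpoly d emb \<rho> q"
| "eval_ncpoly d emb \<rho> (NSub p q) = eval_ncpoly d emb \<rho> p - eval_ncpoly d emb \<rho> q"
| "eval_ncpoly d emb \<rho> (NMul p q) = eval_ncpoly d emb \<rho> p * eval_ncpoly d emb \<rho> q"

definition is_PI :: "nat \<Rightarrow> ('a \<Rightarrow> 'b::comm_ring_1) \<Rightarrow> 'b mat set \<Rightarrow> 'a ncpoly \<Rightarrow> bool" where
  "is_PI d emb S f \<longleftrightarrow> (\<forall>\<rho>. (\<forall>i. \<rho> i \<in> S) \<longrightarrow> eval_ncpoly d emb \<rho> f = 0\<^sub>m d d)"

definition centralizer :: "nat \<Rightarrow> 'a::comm_ring_1 mat \<Rightarrow> 'a mat set" where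
  "centralizer n A = {\<psi> \<in> carrier_mat n n. \<psi> * A = A * \<psi>}"

end

theory Submission
  imports Defs "Jordan_Normal_Form.Jordan_Normal_Form_Existence"
begin

text \<open>Make \<open>K^n\<close> a \<open>K[t]\<close>-module via \<open>t \<cdot> v = A v\<close>; the centralizer of \<open>A\<close> consists exactly of
  the \<open>K[t]\<close>-linear endomorphisms. By the Jordan normal form the module is a direct sum of cyclic
  modules \<open>K[t]/(t - a)^k\<close>, at most \<open>m\<close> of them for each eigenvalue \<open>a\<close>. Taking one block of every
  eigenvalue at a time and gluing their cyclic vectors with the Chinese remainder theorem shows that
  \<open>K^n\<close> is generated by \<open>m\<close> elements, i.e. it is a quotient of the free module \<open>K[t]^m\<close>. Every
  \<open>K[t]\<close>-linear endomorphism lifts to an endomorphism of \<open>K[t]^m\<close>, an \<open>m \<times> m\<close> matrix over \<open>K[t]\<close>,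
  and evaluating a noncommutative polynomial at lifts lifts its evaluation at the original maps. Hence
  every polynomial identity of \<open>M_m(K[t])\<close> vanishes on the centralizer.\<close>

lemma zero_mat_mult_vec [simp]: "v \<in> carrier_vec n \<Longrightarrow> 0\<^sub>m k n *\<^sub>v v = 0\<^sub>v k"
  by (auto intro!: eq_vecI)

lemma smult_mat_mult_vec:
  assumes "B \<in> carrier_mat k n" and "v \<in> carrier_vec n"
  shows "(c \<cdot>\<^sub>m B) *\<^sub>v v = c \<cdot>\<^sub>v (B *\<^sub>v v)"
  using assms by (auto simp: scalar_prod_def sum_distrib_left ac_simps intro!: eq_vecI)

lemma eq_0_mat_if_mult_vec_0:
  fixes M :: "'a::semiring_1 mat"
  assumes M: "M \<in> carrier_mat n k" and M_0: "\<And>v. v \<in> carrier_vec k \<Longrightarrow> M *\<^sub>v v = 0\<^sub>v n"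
  shows "M = 0\<^sub>m n k"
proof (rule eq_matI)
  fix i j assume "i < dim_row (0\<^sub>m n k)" and "j < dim_col (0\<^sub>m n k)"
  then have ij: "i < n" "j < k" by auto
  have "M $$ (i, j) = (M *\<^sub>v unit_vec k j) $ i"
    using M ij by (simp add: scalar_prod_right_unit)
  then show "M $$ (i, j) = 0\<^sub>m n k $$ (i, j)"
    using M_0[of "unit_vec k j"] ij by simp
qed (use M in auto)

lemma additive_vec_sum:
  fixes f :: "'a::comm_monoid_add vec \<Rightarrow> 'b::comm_monoid_add vec"
  assumes f: "\<And>v. v \<in> carrier_vec n \<Longrightarrow> f v \<in> carrier_vec k"
    and f_add: "\<And>v w. v \<in> carrier_vec n \<Longrightarrow> w \<in> carrier_vec n \<Longrightarrow> f (v + w) = f v + f w"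
    and f_0: "f (0\<^sub>v n) = 0\<^sub>v k"
    and I: "finite I" and v: "\<And>i. i \<in> I \<Longrightarrow> v i \<in> carrier_vec n"
  shows "f (vec n (\<lambda>j. \<Sum>i\<in>I. v i $ j)) = vec k (\<lambda>j. \<Sum>i\<in>I. f (v i) $ j)"
  using I v
proof (induct I rule: finite_induct)
  case empty
  then show ?case using f_0 by (simp add: zero_vec_def)
next
  case (insert i I)
  have "vec n (\<lambda>j. \<Sum>i\<in>insert i I. v i $ j) = v i + vec n (\<lambda>j. \<Sum>i\<in>I. v i $ j)"
    using insert by (auto intro!: eq_vecI)
  then show ?case
    using insert f by (auto simp: f_add intro!: eq_vecI)
qed

lemma mult_mat_vec_sum:
  assumes "B \<in> carrier_mat k n" and "finite I" and "\<And>i. i \<in> I \<Longrightarrow> v i \<in> carrier_vec n"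
  shows "B *\<^sub>v vec n (\<lambda>j. \<Sum>i\<in>I. v i $ j) = vec k (\<lambda>j. \<Sum>i\<in>I. (B *\<^sub>v v i) $ j)"
  using assms by (intro additive_vec_sum[where f = "\<lambda>v. B *\<^sub>v v"]) (auto simp: mult_add_distrib_mat_vec)

section \<open>Evaluating polynomials at matrices\<close>

definition poly_mat :: "'a::comm_ring_1 poly \<Rightarrow> 'a mat \<Rightarrow> 'a mat" where
  "poly_mat p A = fold_coeffs (\<lambda>a B. a \<cdot>\<^sub>m 1\<^sub>m (dim_row A) + A * B) p (0\<^sub>m (dim_row A) (dim_row A))"

context
  fixes A :: "'a::comm_ring_1 mat" and n :: nat
  assumes A: "A \<in> carrier_mat n n"
begin

lemma poly_mat_0 [simp]: "poly_mat 0 A = 0\<^sub>m n n"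
  using A by (simp add: poly_mat_def)

lemma poly_mat_pCons: "poly_mat (pCons a p) A = a \<cdot>\<^sub>m 1\<^sub>m n + A * poly_mat p A"
proof (cases "p = 0 \<and> a = 0")
  case True
  then show ?thesis using A by (auto simp: poly_mat_def)
next
  case False
  then show ?thesis using A
    by (auto simp: poly_mat_def fold_coeffs_pCons_not_0_0_eq fold_coeffs_pCons_coeff_not_0_eq)
qed

lemma poly_mat_carrier [simp]: "poly_mat p A \<in> carrier_mat n n"
  by (induct p) (use A in \<open>auto simp: poly_mat_pCons\<close>)

lemma poly_mat_const: "poly_mat [:c:] A = c \<cdot>\<^sub>m 1\<^sub>m n"
  using A by (auto simp: poly_mat_pCons)

lemma poly_mat_1 [simp]: "poly_mat 1 A = 1\<^sub>m n"
  using poly_mat_const[of 1] by (auto simp: one_pCons)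

lemma poly_mat_dim [simp]: "dim_row (poly_mat p A) = n" "dim_col (poly_mat p A) = n"
  by (rule carrier_matD[OF poly_mat_carrier])+

lemma poly_mat_pCons_0: "poly_mat (pCons 0 p) A = A * poly_mat p A"
  using A by (auto simp: poly_mat_pCons intro!: eq_matI)

lemma poly_mat_mult_vec_0 [simp]: "poly_mat p A *\<^sub>v 0\<^sub>v n = 0\<^sub>v n"
  by (auto intro!: eq_vecI)

lemma poly_mat_add: "poly_mat (p + q) A = poly_mat p A + poly_mat q A"
proof (induct p q rule: poly_induct2)
  case (pCons a p b q)
  have "poly_mat (pCons a p + pCons b q) A = (a + b) \<cdot>\<^sub>m 1\<^sub>m n + (A * poly_mat p A + A * poly_mat q A)"
    by (simp add: poly_mat_pCons pCons mult_add_distrib_mat[OF A poly_mat_carrier poly_mat_carrier])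
  also have "\<dots> = poly_mat (pCons a p) A + poly_mat (pCons b q) A"
    using A by (auto simp: poly_mat_pCons intro!: eq_matI)
  finally show ?case .
qed simp

lemma poly_mat_diff: "poly_mat (p - q) A = poly_mat p A - poly_mat q A"
proof (induct p q rule: poly_induct2)
  case (pCons a p b q)
  have "poly_mat (pCons a p - pCons b q) A = (a - b) \<cdot>\<^sub>m 1\<^sub>m n + (A * poly_mat p A - A * poly_mat q A)"
    by (simp add: poly_mat_pCons pCons mult_minus_distrib_mat[OF A poly_mat_carrier poly_mat_carrier])
  also have "\<dots> = poly_mat (pCons a p) A - poly_mat (pCons b q) A"
    using A by (auto simp: poly_mat_pCons intro!: eq_matI)
  finally show ?case .
qed (auto intro!: eq_matI)

lemma poly_mat_smult: "poly_mat (Polynomial.smult c p) A = c \<cdot>\<^sub>m poly_mat p A"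
proof (induct p)
  case (pCons a p)
  have "poly_mat (Polynomial.smult c (pCons a p)) A = (c * a) \<cdot>\<^sub>m 1\<^sub>m n + c \<cdot>\<^sub>m (A * poly_mat p A)"
    by (simp add: poly_mat_pCons pCons mult_smult_distrib[OF A poly_mat_carrier])
  also have "\<dots> = c \<cdot>\<^sub>m poly_mat (pCons a p) A"
    using A by (auto simp: poly_mat_pCons distrib_left intro!: eq_matI)
  finally show ?case .
qed simp

lemma poly_mat_mult: "poly_mat (p * q) A = poly_mat p A * poly_mat q A"
proof (induct p)
  case (pCons a p)
  have "poly_mat (pCons a p * q) A = a \<cdot>\<^sub>m poly_mat q A + A * (poly_mat p A * poly_mat q A)"
    by (simp add: poly_mat_add poly_mat_smult poly_mat_pCons_0 pCons)
  also have "\<dots> = (a \<cdot>\<^sub>m 1\<^sub>m n) * poly_mat q A + A * poly_mat p A * poly_mat q A"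
    using A by (simp add: mult_smult_assoc_mat[OF one_carrier_mat poly_mat_carrier]
        left_mult_one_mat[OF poly_mat_carrier] assoc_mult_mat[of _ n n _ n _ n])
  also have "\<dots> = poly_mat (pCons a p) A * poly_mat q A"
    using A by (simp add: poly_mat_pCons add_mult_distrib_mat[where nr = n and n = n and nc = n])
  finally show ?case .
qed simp

lemma poly_mat_mult_mult_vec:
  assumes "v \<in> carrier_vec n"
  shows "poly_mat (p * q) A *\<^sub>v v = poly_mat p A *\<^sub>v (poly_mat q A *\<^sub>v v)"
  using assms by (simp add: poly_mat_mult assoc_mult_mat_vec[OF poly_mat_carrier poly_mat_carrier])

lemma poly_mat_power: "poly_mat (p ^ k) A = poly_mat p A ^\<^sub>m k"
  by (induct k) (simp_all add: poly_mat_mult power_Suc2 del: power_Suc)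

end

lemma poly_mat_sum_mult_vec:
  assumes A: "A \<in> carrier_mat n n" and v: "v \<in> carrier_vec n" and "finite I"
  shows "poly_mat (\<Sum>i\<in>I. p i) A *\<^sub>v v = vec n (\<lambda>j. \<Sum>i\<in>I. (poly_mat (p i) A *\<^sub>v v) $ j)"
  using \<open>finite I\<close>
proof (induct I rule: finite_induct)
  case empty
  then show ?case using A v by (auto intro!: eq_vecI)
next
  case (insert i I)
  then show ?case using A v
    by (auto simp: poly_mat_add[OF A] add_mult_distrib_mat_vec[OF poly_mat_carrier[OF A] poly_mat_carrier[OF A] v]
        intro!: eq_vecI)
qed

lemma poly_mat_intertwine:
  assumes A: "A \<in> carrier_mat n n" and J: "J \<in> carrier_mat m m" and P: "P \<in> carrier_mat n m"
    and AP: "A * P = P * J"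
  shows "poly_mat p A * P = P * poly_mat p J"
proof (induct p)
  case (pCons a p)
  have "A * poly_mat p A * P = A * (P * poly_mat p J)"
    using A P pCons by (simp add: assoc_mult_mat[of _ n n _ n _ m])
  also have "\<dots> = P * (J * poly_mat p J)"
    using A J P by (simp add: assoc_mult_mat[of _ n n _ m _ m, symmetric] AP assoc_mult_mat[of _ n m _ m _ m])
  finally have "A * poly_mat p A * P = P * (J * poly_mat p J)" .
  moreover have "(a \<cdot>\<^sub>m 1\<^sub>m n) * P = P * (a \<cdot>\<^sub>m 1\<^sub>m m)"
    using P by (auto intro!: eq_matI)
  ultimately have "(a \<cdot>\<^sub>m 1\<^sub>m n + A * poly_mat p A) * P = P * (a \<cdot>\<^sub>m 1\<^sub>m m) + P * (J * poly_mat p J)"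
    using A P by (simp add: add_mult_distrib_mat[where nr = n and n = n])
  also have "\<dots> = P * (a \<cdot>\<^sub>m 1\<^sub>m m + J * poly_mat p J)"
    using J P by (simp add: mult_add_distrib_mat[where n = m and nc = m])
  finally show ?case
    by (simp add: poly_mat_pCons[OF A] poly_mat_pCons[OF J])
qed (use A J P in simp)

lemma poly_mat_four_block:
  assumes A: "A \<in> carrier_mat n n" and D: "D \<in> carrier_mat k k"
  shows "poly_mat p (four_block_mat A (0\<^sub>m n k) (0\<^sub>m k n) D)
    = four_block_mat (poly_mat p A) (0\<^sub>m n k) (0\<^sub>m k n) (poly_mat p D)"
proof (induct p)
  case 0
  show ?case using A D by (auto intro!: eq_matI)
next
  case (pCons a p)
  have M: "four_block_mat A (0\<^sub>m n k) (0\<^sub>m k n) D \<in> carrier_mat (n + k) (n + k)"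
    using A D by auto
  show ?case
    unfolding poly_mat_pCons[OF M] poly_mat_pCons[OF A] poly_mat_pCons[OF D] pCons
    using A D by (simp add: mult_four_block_mat[OF A _ _ D poly_mat_carrier[OF A] _ _ poly_mat_carrier[OF D]])
      (auto intro!: eq_matI)
qed

lemma poly_mat_bezout_mult_vec:
  assumes A: "A \<in> carrier_mat n n" and v: "v \<in> carrier_vec n"
    and ef: "e + f = 1" and e: "poly_mat e A *\<^sub>v v = 0\<^sub>v n"
  shows "poly_mat (p * e + q * f) A *\<^sub>v v = poly_mat q A *\<^sub>v v"
proof -
  have "v = poly_mat (e + f) A *\<^sub>v v"
    using A v ef by simp
  also have "\<dots> = 0\<^sub>v n + poly_mat f A *\<^sub>v v"
    using A v e by (simp add: poly_mat_add add_mult_distrib_mat_vec[OF poly_mat_carrier poly_mat_carrier v])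
  also have "\<dots> = poly_mat f A *\<^sub>v v"
    by (rule left_zero_vec[OF mult_mat_vec_carrier[OF poly_mat_carrier[OF A] v]])
  finally have f: "poly_mat f A *\<^sub>v v = v" ..
  have "poly_mat (p * e + q * f) A *\<^sub>v v
    = poly_mat p A *\<^sub>v (poly_mat e A *\<^sub>v v) + poly_mat q A *\<^sub>v (poly_mat f A *\<^sub>v v)"
    using A v by (simp add: poly_mat_add add_mult_distrib_mat_vec[OF poly_mat_carrier poly_mat_carrier v]
        poly_mat_mult_mult_vec)
  then show ?thesis
    using A v e f by (simp add: left_zero_vec[OF mult_mat_vec_carrier[OF poly_mat_carrier[OF A] v]])
qed

section \<open>Jordan blocks as cyclic modules\<close>

lemma poly_mat_jordan_block:
  fixes a :: "'a::field"
  shows "poly_mat ([:-a, 1:] ^ k) (jordan_block n a) = jordan_block n 0 ^\<^sub>m k"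
proof -
  have "poly_mat (pCons (-a) 1) (jordan_block n a) = jordan_block n 0"
    unfolding poly_mat_pCons[OF jordan_block_carrier] poly_mat_1[OF jordan_block_carrier]
    by (auto simp: jordan_block_def intro!: eq_matI)
  then show ?thesis by (simp add: poly_mat_power[OF jordan_block_carrier] one_pCons)
qed

lemma poly_mat_jordan_block_nilpotent:
  fixes a :: "'a::field"
  assumes "v \<in> carrier_vec n"
  shows "poly_mat ([:-a, 1:] ^ n) (jordan_block n a) *\<^sub>v v = 0\<^sub>v n"
proof -
  have "jordan_block n (0::'a) ^\<^sub>m n = 0\<^sub>m n n"
    by (auto simp: jordan_block_zero_pow intro!: eq_matI)
  then show ?thesis
    using assms by (simp add: poly_mat_jordan_block)
qed

lemma jordan_block_cyclic:
  fixes a :: "'a::field"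
  assumes w: "w \<in> carrier_vec n"
  shows "\<exists>p. poly_mat p (jordan_block n a) *\<^sub>v unit_vec n (n - 1) = w"
proof
  txt \<open>\<open>(t - a)^(n - 1 - i)\<close> maps the last unit vector to the \<open>i\<close>-th one.\<close>
  define p where "p = (\<Sum>i<n. Polynomial.smult (w $ i) ([:-a, 1:] ^ (n - 1 - i)))"
  have "(poly_mat p (jordan_block n a) *\<^sub>v unit_vec n (n - 1)) $ j = w $ j" if j: "j < n" for j
  proof -
    have "(poly_mat p (jordan_block n a) *\<^sub>v unit_vec n (n - 1)) $ j
        = (\<Sum>i<n. w $ i * (jordan_block n 0 ^\<^sub>m (n - 1 - i)) $$ (j, n - 1))"
      using j by (simp add: p_def poly_mat_sum_mult_vec[OF jordan_block_carrier] poly_mat_smult[OF jordan_block_carrier]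
          poly_mat_jordan_block scalar_prod_right_unit)
    also have "\<dots> = (\<Sum>i<n. if i = j then w $ i else 0)"
      using j by (intro sum.cong) (auto simp: jordan_block_zero_pow)
    finally show ?thesis using j by simp
  qed
  then show "poly_mat p (jordan_block n a) *\<^sub>v unit_vec n (n - 1) = w"
    using w by (intro eq_vecI) auto
qed

text \<open>The \<open>K[t]\<close>-linear map \<open>K[t]^m \<rightarrow> K^n\<close> sending the \<open>i\<close>-th unit vector to \<open>g i\<close>, where \<open>K^n\<close> is a
  \<open>K[t]\<close>-module via \<open>t \<cdot> v = A v\<close>.\<close>

definition poly_comb :: "'a::comm_ring_1 mat \<Rightarrow> (nat \<Rightarrow> 'a vec) \<Rightarrow> 'a poly vec \<Rightarrow> 'a vec" where
  "poly_comb A g x = vec (dim_row A) (\<lambda>j. \<Sum>i<dim_vec x. (poly_mat (x $ i) A *\<^sub>v g i) $ j)"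

context
  fixes A :: "'a::comm_ring_1 mat" and n m :: nat and g :: "nat \<Rightarrow> 'a vec"
  assumes A: "A \<in> carrier_mat n n" and g: "\<And>i. i < m \<Longrightarrow> g i \<in> carrier_vec n"
begin

lemma poly_comb_carrier [simp]: "poly_comb A g x \<in> carrier_vec n"
  using A by (simp add: poly_comb_def)

lemma poly_comb_add:
  assumes "x \<in> carrier_vec m" and "y \<in> carrier_vec m"
  shows "poly_comb A g (x + y) = poly_comb A g x + poly_comb A g y"
  using assms A g
  by (auto simp: poly_comb_def poly_mat_add[OF A] add_mult_distrib_mat_vec[OF poly_mat_carrier[OF A] poly_mat_carrier[OF A]]
      sum.distrib intro!: eq_vecI)

lemma poly_comb_diff:
  assumes "x \<in> carrier_vec m" and "y \<in> carrier_vec m"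
  shows "poly_comb A g (x - y) = poly_comb A g x - poly_comb A g y"
  using assms A g
  by (auto simp: poly_comb_def poly_mat_diff[OF A] minus_mult_distrib_mat_vec[OF poly_mat_carrier[OF A] poly_mat_carrier[OF A]]
      sum_subtractf intro!: eq_vecI)

lemma poly_comb_0: "poly_comb A g (0\<^sub>v m) = 0\<^sub>v n"
  using A g by (auto simp: poly_comb_def intro!: eq_vecI)

lemma poly_comb_smult:
  assumes x: "x \<in> carrier_vec m"
  shows "poly_comb A g (p \<cdot>\<^sub>v x) = poly_mat p A *\<^sub>v poly_comb A g x"
proof -
  have "poly_mat p A *\<^sub>v poly_comb A g x = vec n (\<lambda>j. \<Sum>i<m. (poly_mat p A *\<^sub>v (poly_mat (x $ i) A *\<^sub>v g i)) $ j)"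
    unfolding poly_comb_def using A x by (simp, intro mult_mat_vec_sum[OF poly_mat_carrier[OF A]])
      (auto intro: mult_mat_vec_carrier[OF poly_mat_carrier[OF A] g])
  then show ?thesis
    using A g x by (simp add: poly_comb_def poly_mat_mult[OF A] assoc_mult_mat_vec[of _ n n _ n])
qed

lemma poly_comb_const_smult:
  assumes "x \<in> carrier_vec m"
  shows "poly_comb A g ([:c:] \<cdot>\<^sub>v x) = c \<cdot>\<^sub>v poly_comb A g x"
  using assms A by (simp add: poly_comb_smult poly_mat_const[OF A] smult_mat_mult_vec[of _ n n])

lemma poly_comb_cong:
  assumes "dim_vec x = dim_vec y" and "\<And>i. i < dim_vec x \<Longrightarrow> poly_mat (x $ i) A *\<^sub>v g i = poly_mat (y $ i) A *\<^sub>v g i"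
  shows "poly_comb A g x = poly_comb A g y"
  using assms by (simp add: poly_comb_def)

lemma poly_comb_single:
  assumes x: "x \<in> carrier_vec m" and i: "i < m" and g_0: "\<And>k. k < m \<Longrightarrow> k \<noteq> i \<Longrightarrow> g k = 0\<^sub>v n"
  shows "poly_comb A g x = poly_mat (x $ i) A *\<^sub>v g i"
proof (rule eq_vecI)
  fix j assume "j < dim_vec (poly_mat (x $ i) A *\<^sub>v g i)"
  then have j: "j < n" using A by simp
  have "(\<Sum>k<m. (poly_mat (x $ k) A *\<^sub>v g k) $ j) = (poly_mat (x $ i) A *\<^sub>v g i) $ j"
    using i j A g_0 by (subst sum.remove[of "{..<m}" i]) (auto intro!: sum.neutral)
  then show "poly_comb A g x $ j = (poly_mat (x $ i) A *\<^sub>v g i) $ j"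
    using x j A by (simp add: poly_comb_def)
qed (use A in simp)

lemma poly_comb_lift:
  assumes surj: "\<And>w. w \<in> carrier_vec n \<Longrightarrow> \<exists>x\<in>carrier_vec m. poly_comb A g x = w"
    and B: "B \<in> carrier_mat n n" and BA: "B * A = A * B"
  shows "\<exists>G\<in>carrier_mat m m. \<forall>x\<in>carrier_vec m. poly_comb A g (G *\<^sub>v x) = B *\<^sub>v poly_comb A g x"
proof -
  have "\<forall>i. \<exists>y. i < m \<longrightarrow> y \<in> carrier_vec m \<and> poly_comb A g y = B *\<^sub>v g i"
    using surj B g by (metis mult_mat_vec_carrier)
  then obtain y where y: "\<And>i. i < m \<Longrightarrow> y i \<in> carrier_vec m"
    and y_g: "\<And>i. i < m \<Longrightarrow> poly_comb A g (y i) = B *\<^sub>v g i" by metis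
  define G where "G = mat m m (\<lambda>(k, i). y i $ k)"
  have commute: "poly_mat p A *\<^sub>v (B *\<^sub>v v) = B *\<^sub>v (poly_mat p A *\<^sub>v v)" if "v \<in> carrier_vec n" for p v
    using poly_mat_intertwine[OF A A B, of p] BA A B that
    by (simp add: assoc_mult_mat_vec[of _ n n _ n, symmetric])
  have "poly_comb A g (G *\<^sub>v x) = B *\<^sub>v poly_comb A g x" if x: "x \<in> carrier_vec m" for x
  proof -
    have "G *\<^sub>v x = vec m (\<lambda>k. \<Sum>i<m. (x $ i \<cdot>\<^sub>v y i) $ k)"
      using x y[THEN carrier_vecD] by (auto simp: G_def scalar_prod_def mult.commute intro!: eq_vecI sum.cong)
    then have "poly_comb A g (G *\<^sub>v x) = vec n (\<lambda>j. \<Sum>i<m. poly_comb A g (x $ i \<cdot>\<^sub>v y i) $ j)"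
      using y by (simp, intro additive_vec_sum) (auto simp: poly_comb_add poly_comb_0)
    also have "\<dots> = vec n (\<lambda>j. \<Sum>i<m. (B *\<^sub>v (poly_mat (x $ i) A *\<^sub>v g i)) $ j)"
      using y y_g g by (auto simp: poly_comb_smult commute intro!: eq_vecI sum.cong)
    also have "\<dots> = B *\<^sub>v poly_comb A g x"
      unfolding poly_comb_def using A x
      by (simp, intro mult_mat_vec_sum[OF B, symmetric])
        (auto intro: mult_mat_vec_carrier[OF poly_mat_carrier[OF A] g])
    finally show ?thesis .
  qed
  then show ?thesis by (intro bexI[of _ G]) (auto simp: G_def)
qed

end

lemma poly_comb_similar:
  assumes A: "A \<in> carrier_mat n n" and J: "J \<in> carrier_mat n n" and P: "P \<in> carrier_mat n n"
    and AP: "A * P = P * J" and g: "\<And>i. i < dim_vec x \<Longrightarrow> g i \<in> carrier_vec n"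
  shows "poly_comb A (\<lambda>i. P *\<^sub>v g i) x = P *\<^sub>v poly_comb J g x"
proof -
  have "poly_mat p A *\<^sub>v (P *\<^sub>v v) = P *\<^sub>v (poly_mat p J *\<^sub>v v)" if "v \<in> carrier_vec n" for p v
    using poly_mat_intertwine[OF A J P AP, of p] A J P that
    by (simp add: assoc_mult_mat_vec[of _ n n _ n, symmetric])
  then show ?thesis
    unfolding poly_comb_def using A J P g
    by (simp, intro mult_mat_vec_sum[OF P, symmetric])
      (auto intro: mult_mat_vec_carrier[OF poly_mat_carrier[OF J] g])
qed

lemma poly_comb_four_block:
  assumes B: "B \<in> carrier_mat n n" and D: "D \<in> carrier_mat k k"
    and h: "\<And>i. i < dim_vec x \<Longrightarrow> h i \<in> carrier_vec n" and g: "\<And>i. i < dim_vec x \<Longrightarrow> g i \<in> carrier_vec k"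
  shows "poly_comb (four_block_mat B (0\<^sub>m n k) (0\<^sub>m k n) D) (\<lambda>i. h i @\<^sub>v g i) x
    = poly_comb B h x @\<^sub>v poly_comb D g x"
  using B D h g
  by (auto simp: poly_comb_def poly_mat_four_block mult_mat_vec_split[OF poly_mat_carrier[OF B] poly_mat_carrier[OF D]]
      intro!: eq_vecI)

section \<open>Transfer of polynomial identities\<close>

lemma eval_ncpoly_lift:
  fixes \<pi> :: "'a::comm_ring_1 poly vec \<Rightarrow> 'a vec"
  assumes \<pi>_carrier: "\<And>x. x \<in> carrier_vec m \<Longrightarrow> \<pi> x \<in> carrier_vec n"
    and \<pi>_add: "\<And>x y. x \<in> carrier_vec m \<Longrightarrow> y \<in> carrier_vec m \<Longrightarrow> \<pi> (x + y) = \<pi> x + \<pi> y"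
    and \<pi>_diff: "\<And>x y. x \<in> carrier_vec m \<Longrightarrow> y \<in> carrier_vec m \<Longrightarrow> \<pi> (x - y) = \<pi> x - \<pi> y"
    and \<pi>_smult: "\<And>x c. x \<in> carrier_vec m \<Longrightarrow> \<pi> ([:c:] \<cdot>\<^sub>v x) = c \<cdot>\<^sub>v \<pi> x"
    and G: "\<And>i. G i \<in> carrier_mat m m" and \<rho>: "\<And>i. \<rho> i \<in> carrier_mat n n"
    and G_lift: "\<And>i x. x \<in> carrier_vec m \<Longrightarrow> \<pi> (G i *\<^sub>v x) = \<rho> i *\<^sub>v \<pi> x"
  shows "eval_ncpoly m (\<lambda>c. [:c:]) G h \<in> carrier_mat m m \<and> eval_ncpoly n (\<lambda>c. c) \<rho> h \<in> carrier_mat n n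
    \<and> (\<forall>x\<in>carrier_vec m. \<pi> (eval_ncpoly m (\<lambda>c. [:c:]) G h *\<^sub>v x) = eval_ncpoly n (\<lambda>c. c) \<rho> h *\<^sub>v \<pi> x)"
proof (induct h)
  case (NConst c)
  then show ?case using \<pi>_smult \<pi>_carrier by (auto simp: smult_mat_mult_vec[OF one_carrier_mat])
next
  case (NAdd p q)
  then show ?case using \<pi>_add \<pi>_carrier by (auto simp: add_mult_distrib_mat_vec)
next
  case (NSub p q)
  then show ?case using \<pi>_diff \<pi>_carrier by (auto simp: minus_mult_distrib_mat_vec)
next
  case (NMul p q)
  then show ?case using \<pi>_carrier by (auto simp: assoc_mult_mat_vec)
qed (use G \<rho> G_lift in auto)

lemma is_PI_transfer:
  fixes \<pi> :: "'a::comm_ring_1 poly vec \<Rightarrow> 'a vec" and S :: "'a mat set"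
  assumes S: "S \<subseteq> carrier_mat n n"
    and \<pi>_carrier: "\<And>x. x \<in> carrier_vec m \<Longrightarrow> \<pi> x \<in> carrier_vec n"
    and \<pi>_add: "\<And>x y. x \<in> carrier_vec m \<Longrightarrow> y \<in> carrier_vec m \<Longrightarrow> \<pi> (x + y) = \<pi> x + \<pi> y"
    and \<pi>_diff: "\<And>x y. x \<in> carrier_vec m \<Longrightarrow> y \<in> carrier_vec m \<Longrightarrow> \<pi> (x - y) = \<pi> x - \<pi> y"
    and \<pi>_smult: "\<And>x c. x \<in> carrier_vec m \<Longrightarrow> \<pi> ([:c:] \<cdot>\<^sub>v x) = c \<cdot>\<^sub>v \<pi> x"
    and \<pi>_surj: "\<And>w. w \<in> carrier_vec n \<Longrightarrow> \<exists>x\<in>carrier_vec m. \<pi> x = w"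
    and lift: "\<And>\<psi>. \<psi> \<in> S \<Longrightarrow> \<exists>G\<in>carrier_mat m m. \<forall>x\<in>carrier_vec m. \<pi> (G *\<^sub>v x) = \<psi> *\<^sub>v \<pi> x"
    and PI: "is_PI m (\<lambda>c. [:c:]) (carrier_mat m m) f"
  shows "is_PI n (\<lambda>c. c) S f"
  unfolding is_PI_def
proof (intro allI impI)
  fix \<rho> :: "nat \<Rightarrow> 'a mat" assume \<rho>: "\<forall>i. \<rho> i \<in> S"
  have "\<forall>i. \<exists>G\<in>carrier_mat m m. \<forall>x\<in>carrier_vec m. \<pi> (G *\<^sub>v x) = \<rho> i *\<^sub>v \<pi> x"
    using lift \<rho> by blast
  then obtain G where G: "\<And>i. G i \<in> carrier_mat m m"
    and G_lift: "\<And>i x. x \<in> carrier_vec m \<Longrightarrow> \<pi> (G i *\<^sub>v x) = \<rho> i *\<^sub>v \<pi> x"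
    by metis
  have "\<rho> i \<in> carrier_mat n n" for i
    using \<rho> S by auto
  note eval = eval_ncpoly_lift[where G = G and \<rho> = \<rho> and h = f, OF \<pi>_carrier \<pi>_add \<pi>_diff \<pi>_smult G this G_lift]
  have "eval_ncpoly m (\<lambda>c. [:c:]) G f = 0\<^sub>m m m"
    using PI G unfolding is_PI_def by auto
  show "eval_ncpoly n (\<lambda>c. c) \<rho> f = 0\<^sub>m n n"
  proof (rule eq_0_mat_if_mult_vec_0)
    show "eval_ncpoly n (\<lambda>c. c) \<rho> f \<in> carrier_mat n n"
      using eval by auto
    fix w :: "'a vec" assume "w \<in> carrier_vec n"
    then obtain x where x: "x \<in> carrier_vec m" and "\<pi> x = w"
      using \<pi>_surj by auto
    then have "eval_ncpoly n (\<lambda>c. c) \<rho> f *\<^sub>v w = \<pi> (eval_ncpoly m (\<lambda>c. [:c:]) G f *\<^sub>v x)"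
      using eval by auto
    also have "\<dots> = \<pi> (x - x)"
      using x \<open>eval_ncpoly m (\<lambda>c. [:c:]) G f = 0\<^sub>m m m\<close> by (auto intro!: arg_cong[where f = \<pi>] eq_vecI)
    also have "\<dots> = 0\<^sub>v n"
      using \<pi>_diff[OF x x] \<pi>_carrier[OF x] by simp
    finally show "eval_ncpoly n (\<lambda>c. c) \<rho> f *\<^sub>v w = 0\<^sub>v n" .
  qed
qed

lemma centralizer_is_PI:
  assumes A: "A \<in> carrier_mat n n" and g: "\<And>i. i < m \<Longrightarrow> g i \<in> carrier_vec n"
    and surj: "\<And>w. w \<in> carrier_vec n \<Longrightarrow> \<exists>x\<in>carrier_vec m. poly_comb A g x = w"
    and PI: "is_PI m (\<lambda>c. [:c:]) (carrier_mat m m) f"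
  shows "is_PI n (\<lambda>c. c) (centralizer n A) f"
  by (rule is_PI_transfer[OF _ _ _ _ _ surj _ PI])
    (auto simp: centralizer_def poly_comb_carrier[OF A g] poly_comb_add[OF A g] poly_comb_diff[OF A g] poly_comb_const_smult[OF A g]
      intro!: poly_comb_lift[OF A g surj])

definition comaximal :: "'a::comm_ring_1 \<Rightarrow> 'a \<Rightarrow> bool" where
  "comaximal p q \<longleftrightarrow> (\<exists>c d. c * p + d * q = 1)"

lemma comaximal_commute: "comaximal p q \<longleftrightarrow> comaximal q p"
  unfolding comaximal_def by (metis add.commute)

lemma comaximal_1_right [simp]: "comaximal p 1"
  unfolding comaximal_def by (metis add_0 mult_1 mult_zero_left)

lemma comaximal_mult_right:
  assumes "comaximal p q" and "comaximal p r"
  shows "comaximal p (q * r)"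
proof -
  obtain c d c' d' where "c * p + d * q = 1" and "c' * p + d' * r = 1"
    using assms unfolding comaximal_def by blast
  then have "(c * p + d * q) * (c' * p + d' * r) = 1"
    by simp
  then have "(c * c' * p + c * d' * r + d * q * c') * p + (d * d') * (q * r) = 1"
    by (simp add: algebra_simps)
  then show ?thesis
    unfolding comaximal_def by blast
qed

lemma comaximal_power_right: "comaximal p q \<Longrightarrow> comaximal p (q ^ k)"
  by (induct k) (simp_all add: comaximal_mult_right)

lemma comaximal_power_power: "comaximal p q \<Longrightarrow> comaximal (p ^ j) (q ^ k)"
  by (metis comaximal_commute comaximal_power_right)

lemma comaximal_linear_poly:
  fixes a b :: "'a::field"
  assumes "a \<noteq> b"
  shows "comaximal [:-a, 1:] [:-b, 1:]"
proof -
  have "[:1 / (b - a):] * ([:-a, 1:] - [:-b, 1:]) = 1"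
    using assms by (simp add: one_pCons field_simps)
  then have "[:1 / (b - a):] * [:-a, 1:] + (- [:1 / (b - a):]) * [:-b, 1:] = 1"
    by (metis add_uminus_conv_diff mult_minus_left right_diff_distrib)
  then show ?thesis
    unfolding comaximal_def by blast
qed

section \<open>Generators of a Jordan matrix\<close>

definition block_count :: "'a \<Rightarrow> (nat \<times> 'a) list \<Rightarrow> nat" where
  "block_count a n_as = length (filter (\<lambda>(k, b). b = a) n_as)"

lemma block_count_Cons [simp]:
  "block_count a ((k, b) # n_as) = (if b = a then Suc (block_count a n_as) else block_count a n_as)"
  by (simp add: block_count_def)

text \<open>Generator \<open>i\<close> is the sum, over all eigenvalues \<open>a\<close>, of the cyclic vector (last unit vector)
  of the \<open>i\<close>-th Jordan block with eigenvalue \<open>a\<close>, counting blocks from the end of the list.\<close>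

fun jordan_gens :: "(nat \<times> 'a::zero_neq_one) list \<Rightarrow> nat \<Rightarrow> 'a vec" where
  "jordan_gens [] i = 0\<^sub>v 0"
| "jordan_gens ((k, a) # n_as) i =
    (if i = block_count a n_as then unit_vec k (k - 1) else 0\<^sub>v k) @\<^sub>v jordan_gens n_as i"

lemma jordan_gens_carrier: "jordan_gens n_as i \<in> carrier_vec (sum_list (map fst n_as))"
  by (induct n_as i rule: jordan_gens.induct) auto

definition char_poly_except :: "'a::comm_ring_1 \<Rightarrow> (nat \<times> 'a) list \<Rightarrow> 'a poly" where
  "char_poly_except a n_as = (\<Prod>(k, b) \<leftarrow> filter (\<lambda>(k, b). b \<noteq> a) n_as. [:-b, 1:] ^ k)"

lemma char_poly_except_Cons [simp]:
  "char_poly_except a ((k, b) # n_as)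
    = (if b = a then char_poly_except a n_as else [:-b, 1:] ^ k * char_poly_except a n_as)"
  by (simp add: char_poly_except_def)

lemma comaximal_char_poly_except:
  fixes a :: "'a::field"
  shows "comaximal ([:-a, 1:] ^ k) (char_poly_except a n_as)"
  by (induct n_as) (auto simp: char_poly_except_def comaximal_power_power comaximal_linear_poly comaximal_mult_right)

lemma poly_mat_jordan_matrix_Cons_mult_vec:
  assumes "v \<in> carrier_vec k" and "w \<in> carrier_vec (sum_list (map fst n_as))"
  shows "poly_mat p (jordan_matrix ((k, a) # n_as)) *\<^sub>v (v @\<^sub>v w)
    = (poly_mat p (jordan_block k a) *\<^sub>v v) @\<^sub>v (poly_mat p (jordan_matrix n_as) *\<^sub>v w)"
  using assms
  by (simp add: jordan_matrix_Cons poly_mat_four_block mult_mat_vec_split[OF poly_mat_carrier poly_mat_carrier])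

lemma char_poly_except_jordan_gens:
  fixes n_as :: "(nat \<times> 'a::field) list"
  assumes "block_count a n_as \<le> i"
  shows "poly_mat (char_poly_except a n_as) (jordan_matrix n_as) *\<^sub>v jordan_gens n_as i
    = 0\<^sub>v (sum_list (map fst n_as))"
  using assms
proof (induct n_as)
  case Nil
  show ?case by (auto simp: poly_mat_dim[OF jordan_matrix_carrier] intro!: eq_vecI)
next
  case (Cons kb n_as)
  obtain k b where kb: "kb = (k, b)" by force
  let ?N = "sum_list (map fst n_as)" and ?Q = "char_poly_except a n_as"
  let ?h = "if i = block_count b n_as then unit_vec k (k - 1) else 0\<^sub>v k :: 'a vec"
  have IH: "poly_mat ?Q (jordan_matrix n_as) *\<^sub>v jordan_gens n_as i = 0\<^sub>v ?N"
    using Cons by (auto simp: kb split: if_splits)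
  have zero: "0\<^sub>v k @\<^sub>v 0\<^sub>v ?N = 0\<^sub>v (k + ?N)"
    by (auto intro!: eq_vecI)
  show ?case
  proof (cases "b = a")
    case True
    then have "?h = 0\<^sub>v k"
      using Cons.prems by (simp add: kb)
    then show ?thesis
      using True IH zero
      by (simp add: kb poly_mat_jordan_matrix_Cons_mult_vec jordan_gens_carrier poly_mat_dim[OF jordan_block_carrier])
  next
    case False
    let ?v = "poly_mat ?Q (jordan_block k b) *\<^sub>v ?h"
    have "poly_mat ?Q (jordan_matrix (kb # n_as)) *\<^sub>v jordan_gens (kb # n_as) i = ?v @\<^sub>v 0\<^sub>v ?N"
      unfolding kb jordan_gens.simps using IH
      by (subst poly_mat_jordan_matrix_Cons_mult_vec) (auto simp: jordan_gens_carrier)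
    moreover have "char_poly_except a (kb # n_as) = [:-b, 1:] ^ k * ?Q"
      using False by (simp add: kb)
    ultimately have "poly_mat (char_poly_except a (kb # n_as)) (jordan_matrix (kb # n_as)) *\<^sub>v jordan_gens (kb # n_as) i
        = poly_mat ([:-b, 1:] ^ k) (jordan_matrix (kb # n_as)) *\<^sub>v (?v @\<^sub>v 0\<^sub>v ?N)"
      by (simp only: poly_mat_mult_mult_vec[OF jordan_matrix_carrier jordan_gens_carrier])
    also have "\<dots> = (poly_mat ([:-b, 1:] ^ k) (jordan_block k b) *\<^sub>v ?v) @\<^sub>v 0\<^sub>v ?N"
      by (simp add: kb poly_mat_jordan_matrix_Cons_mult_vec mult_mat_vec_carrier[OF poly_mat_carrier[OF jordan_block_carrier]])
    also have "\<dots> = 0\<^sub>v k @\<^sub>v 0\<^sub>v ?N"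
      by (subst poly_mat_jordan_block_nilpotent)
        (simp_all add: mult_mat_vec_carrier[OF poly_mat_carrier[OF jordan_block_carrier]])
    finally show ?thesis
      using zero by (simp add: kb)
  qed
qed

lemma jordan_gens_separating_polys:
  fixes a :: "'a::field"
  obtains e f where "e + f = 1"
    and "\<And>v. v \<in> carrier_vec k \<Longrightarrow> poly_mat e (jordan_block k a) *\<^sub>v v = 0\<^sub>v k"
    and "poly_mat f (jordan_matrix n_as) *\<^sub>v jordan_gens n_as (block_count a n_as) = 0\<^sub>v (sum_list (map fst n_as))"
proof -
  obtain c d where "c * [:-a, 1:] ^ k + d * char_poly_except a n_as = 1"
    using comaximal_char_poly_except[of a k n_as] unfolding comaximal_def by blast
  moreover have "poly_mat (c * [:-a, 1:] ^ k) (jordan_block k a) *\<^sub>v v = 0\<^sub>v k" if "v \<in> carrier_vec k" for v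
    using that by (simp add: poly_mat_mult_mult_vec[OF jordan_block_carrier] poly_mat_jordan_block_nilpotent)
  moreover have "poly_mat (d * char_poly_except a n_as) (jordan_matrix n_as) *\<^sub>v jordan_gens n_as (block_count a n_as)
      = 0\<^sub>v (sum_list (map fst n_as))"
    by (simp add: poly_mat_mult_mult_vec[OF jordan_matrix_carrier jordan_gens_carrier] char_poly_except_jordan_gens)
  ultimately show ?thesis
    using that by blast
qed

lemma jordan_gens_generate_Cons:
  fixes a :: "'a::field"
  assumes IH: "\<And>w. w \<in> carrier_vec (sum_list (map fst n_as))
      \<Longrightarrow> \<exists>x\<in>carrier_vec m. poly_comb (jordan_matrix n_as) (jordan_gens n_as) x = w"
    and i0: "block_count a n_as < m" and w: "w \<in> carrier_vec (sum_list (map fst ((k, a) # n_as)))"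
  shows "\<exists>x\<in>carrier_vec m. poly_comb (jordan_matrix ((k, a) # n_as)) (jordan_gens ((k, a) # n_as)) x = w"
proof -
  let ?N = "sum_list (map fst n_as)" and ?J = "jordan_matrix n_as" and ?g = "jordan_gens n_as"
  let ?B = "jordan_block k a" and ?u = "unit_vec k (k - 1) :: 'a vec" and ?i0 = "block_count a n_as"
  define h where "h i = (if i = ?i0 then ?u else 0\<^sub>v k)" for i
  have h: "h i \<in> carrier_vec k" for i
    by (simp add: h_def)
  define w1 w2 where "w1 = vec_first w k" and "w2 = vec_last w ?N"
  obtain x2 where x2: "x2 \<in> carrier_vec m" and x2_w2: "poly_comb ?J ?g x2 = w2"
    using IH[OF vec_last_carrier] unfolding w2_def by blast
  obtain S where S: "poly_mat S ?B *\<^sub>v ?u = w1"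
    using jordan_block_cyclic[of w1 k a] by (auto simp: w1_def)
  obtain e f where ef: "e + f = 1" and e: "poly_mat e ?B *\<^sub>v ?u = 0\<^sub>v k" and f: "poly_mat f ?J *\<^sub>v ?g ?i0 = 0\<^sub>v ?N"
    using jordan_gens_separating_polys[of k a n_as] unit_vec_carrier by metis
  txt \<open>Only the coordinate of \<open>x2\<close> that carries the new block's cyclic vector changes: on the new block
    it now produces \<open>w1\<close>, on the remaining blocks it acts as before.\<close>
  define x where "x = vec m (\<lambda>i. if i = ?i0 then x2 $ i * e + S * f else x2 $ i)"
  have x: "x \<in> carrier_vec m"
    by (simp add: x_def)
  have "poly_comb ?B h x = poly_mat (x2 $ ?i0 * e + S * f) ?B *\<^sub>v ?u"
    using x i0 by (subst poly_comb_single[OF jordan_block_carrier _ x i0]) (auto simp: h_def x_def)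
  also have "\<dots> = w1"
    using poly_mat_bezout_mult_vec[OF jordan_block_carrier unit_vec_carrier ef e] S by simp
  finally have x_w1: "poly_comb ?B h x = w1" .
  have "poly_comb ?J ?g x = poly_comb ?J ?g x2"
  proof (rule poly_comb_cong)
    fix i assume "i < dim_vec x"
    have "poly_mat (S * f + x2 $ ?i0 * e) ?J *\<^sub>v ?g ?i0 = poly_mat (x2 $ ?i0) ?J *\<^sub>v ?g ?i0"
      using ef by (intro poly_mat_bezout_mult_vec[OF jordan_matrix_carrier jordan_gens_carrier _ f]) (simp add: add.commute)
    then show "poly_mat (x $ i) ?J *\<^sub>v ?g i = poly_mat (x2 $ i) ?J *\<^sub>v ?g i"
      using \<open>i < dim_vec x\<close> by (auto simp: x_def add.commute)
  qed (use x x2 in auto)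
  moreover have "jordan_gens ((k, a) # n_as) = (\<lambda>i. h i @\<^sub>v ?g i)"
    by (auto simp: h_def)
  ultimately have "poly_comb (jordan_matrix ((k, a) # n_as)) (jordan_gens ((k, a) # n_as)) x = w1 @\<^sub>v w2"
    using x_w1 x2_w2 x
    by (simp add: jordan_matrix_Cons poly_comb_four_block[OF jordan_block_carrier jordan_matrix_carrier]
        h jordan_gens_carrier)
  also have "\<dots> = w"
    using w by (simp add: w1_def w2_def)
  finally show ?thesis
    using x by blast
qed

lemma jordan_gens_generate:
  fixes n_as :: "(nat \<times> 'a::field) list"
  assumes "\<And>a. block_count a n_as \<le> m" and "w \<in> carrier_vec (sum_list (map fst n_as))"
  shows "\<exists>x\<in>carrier_vec m. poly_comb (jordan_matrix n_as) (jordan_gens n_as) x = w"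
  using assms
proof (induct n_as arbitrary: w)
  case Nil
  then show ?case
    by (intro bexI[of _ "0\<^sub>v m"]) (auto simp: poly_comb_def intro!: eq_vecI)
next
  case (Cons kb n_as)
  obtain k a where kb: "kb = (k, a)" by force
  have "block_count b n_as \<le> m" for b
    using Cons.prems(1)[of b] by (simp add: kb split: if_splits)
  then have IH: "\<And>w. w \<in> carrier_vec (sum_list (map fst n_as))
      \<Longrightarrow> \<exists>x\<in>carrier_vec m. poly_comb (jordan_matrix n_as) (jordan_gens n_as) x = w"
    using Cons.hyps by blast
  have "block_count a n_as < m"
    using Cons.prems(1)[of a] by (simp add: kb)
  then show ?case
    using jordan_gens_generate_Cons[OF IH] Cons.prems(2) unfolding kb by blast
qed

section \<open>Jordan normal form over algebraically closed fields\<close>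

lemma right_inverse_mat_exists:
  fixes W :: "'a::semiring_1 mat"
  assumes W: "W \<in> carrier_mat n n" and image: "\<And>j. \<exists>x\<in>carrier_vec n. W *\<^sub>v x = unit_vec n j"
  obtains X where "X \<in> carrier_mat n n" "W * X = 1\<^sub>m n"
proof -
  obtain x where x: "\<And>j. x j \<in> carrier_vec n" and Wx: "\<And>j. W *\<^sub>v x j = unit_vec n j"
    using image by metis
  define X where "X = mat n n (\<lambda>(i, j). x j $ i)"
  have "W * X = 1\<^sub>m n"
  proof (rule eq_matI)
    fix i j assume "i < dim_row (1\<^sub>m n :: 'a mat)" and "j < dim_col (1\<^sub>m n :: 'a mat)"
    then have ij: "i < n" "j < n" by auto
    have "col X j = x j"
      using x[of j] ij by (auto simp: X_def intro!: eq_vecI)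
    then have "(W * X) $$ (i, j) = (W *\<^sub>v x j) $ i"
      using W ij by (simp add: X_def)
    then show "(W * X) $$ (i, j) = 1\<^sub>m n $$ (i, j)"
      using ij by (simp add: Wx)
  qed (use W in \<open>auto simp: X_def\<close>)
  moreover have "X \<in> carrier_mat n n"
    by (simp add: X_def)
  ultimately show ?thesis
    using that by blast
qed

lemma invertible_mat_with_first_col:
  fixes v :: "'a::field vec"
  assumes v: "v \<in> carrier_vec n" and v0: "v \<noteq> 0\<^sub>v n"
  obtains W X where "W \<in> carrier_mat n n" "X \<in> carrier_mat n n" "W * X = 1\<^sub>m n" "X * W = 1\<^sub>m n"
    "col W 0 = v"
proof -
  interpret V: vec_space "TYPE('a)" n .
  define b where "b = basis_completion v"
  from V.basis_completion[OF v v0, folded b_def]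
  have span_b: "V.span (set b) = carrier_vec n" and b: "set b \<subseteq> carrier_vec n" and hd_b: "hd b = v"
    and len_b: "length b = n" by auto
  define W where "W = mat_of_cols n b"
  have W: "W \<in> carrier_mat n n"
    unfolding W_def using len_b by auto
  have "\<exists>x\<in>carrier_vec n. W *\<^sub>v x = unit_vec n j" for j
  proof -
    have "unit_vec n j \<in> V.span_list b"
      using span_b V.span_list_as_span[OF b] by simp
    then obtain c where "unit_vec n j = V.lincomb_list c b"
      by (metis V.in_span_listE)
    also have "\<dots> = W *\<^sub>v vec (length b) c"
      unfolding W_def using b by (intro V.lincomb_list_as_mat_mult) auto
    finally show ?thesis
      using len_b by (intro bexI[of _ "vec (length b) c"]) auto
  qed
  then obtain X where X: "X \<in> carrier_mat n n" and WX: "W * X = 1\<^sub>m n"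
    using right_inverse_mat_exists[OF W] by blast
  have "n > 0"
    using v v0 by (auto intro!: eq_vecI)
  then obtain b' where "b = v # b'"
    using hd_b len_b by (cases b) auto
  then have "col W 0 = v"
    using \<open>n > 0\<close> b len_b by (simp add: W_def col_mat_of_cols)
  then show ?thesis
    using that W X WX mat_mult_left_right_inverse[OF W X WX] by blast
qed

lemma similar_mat_wit_conj:
  assumes A: "A \<in> carrier_mat n n" and W: "W \<in> carrier_mat n n" and X: "X \<in> carrier_mat n n"
    and WX: "W * X = 1\<^sub>m n" and XW: "X * W = 1\<^sub>m n"
  shows "similar_mat_wit A (X * A * W) W X"
proof (rule similar_mat_witI[OF WX XW _ A _ W X])
  have "W * (X * A * W) * X = (W * X) * A * (W * X)"
    using W X A by (simp add: assoc_mult_mat[of _ n n _ n _ n])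
  then show "A = W * (X * A * W) * X"
    using A WX by simp
qed (use A W X in simp)

lemma similar_mat_eigenvalue_block:
  fixes A :: "'a::field mat"
  assumes A: "A \<in> carrier_mat (Suc k) (Suc k)" and ev: "eigenvalue A e"
  obtains A2 A3 where "A2 \<in> carrier_mat 1 k" "A3 \<in> carrier_mat k k"
    "similar_mat A (four_block_mat (mat 1 1 (\<lambda>_. e)) A2 (0\<^sub>m k 1) A3)"
proof -
  let ?n = "Suc k"
  define v where "v = find_eigenvector A e"
  have "eigenvector A v e"
    unfolding v_def by (rule find_eigenvector[OF A ev])
  then have v: "v \<in> carrier_vec ?n" and v0: "v \<noteq> 0\<^sub>v ?n" and Av: "A *\<^sub>v v = e \<cdot>\<^sub>v v"
    using A by (auto simp: eigenvector_def)
  obtain W X where W: "W \<in> carrier_mat ?n ?n" and X: "X \<in> carrier_mat ?n ?n"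
    and WX: "W * X = 1\<^sub>m ?n" and XW: "X * W = 1\<^sub>m ?n" and col_W: "col W 0 = v"
    using invertible_mat_with_first_col[OF v v0] by blast
  define A' where "A' = X * A * W"
  have A': "A' \<in> carrier_mat ?n ?n"
    using X A W by (simp add: A'_def)
  have sim: "similar_mat A A'"
    unfolding A'_def similar_mat_def using similar_mat_wit_conj[OF A W X WX XW] by blast
  have W_u: "W *\<^sub>v unit_vec ?n 0 = v"
    using W col_W by (auto simp: scalar_prod_right_unit intro!: eq_vecI)
  have "X *\<^sub>v v = unit_vec ?n 0"
    using assoc_mult_mat_vec[OF X W, of "unit_vec ?n 0"] XW W_u by simp
  then have A'_u: "A' *\<^sub>v unit_vec ?n 0 = e \<cdot>\<^sub>v unit_vec ?n 0"
    using X A W v Av W_u by (simp add: A'_def assoc_mult_mat_vec[of _ ?n ?n _ ?n] mult_mat_vec[OF X])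
  have col0: "A' $$ (i, 0) = (if i = 0 then e else 0)" if "i < ?n" for i
    using arg_cong[where f = "\<lambda>v. v $ i", OF A'_u] that A' by (auto simp: scalar_prod_right_unit)
  obtain A1 A2 A0 A3 where split: "split_block A' 1 1 = (A1, A2, A0, A3)"
    by (cases "split_block A' 1 1") auto
  have "dim_row A' = 1 + k" "dim_col A' = 1 + k"
    using A' by auto
  from split_block[OF split this] have "A2 \<in> carrier_mat 1 k" and "A3 \<in> carrier_mat k k"
    and A'_block: "A' = four_block_mat A1 A2 A0 A3" by auto
  moreover have "A0 = 0\<^sub>m k 1" and "A1 = mat 1 1 (\<lambda>_. e)"
    using split[unfolded split_block_def Let_def] col0 A' by auto
  ultimately show ?thesis
    using that sim by blast
qed

lemma similar_mat_four_block_lower_right: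
  assumes A1: "A1 \<in> carrier_mat j j" and A2: "A2 \<in> carrier_mat j k" and A3: "A3 \<in> carrier_mat k k"
    and "similar_mat A3 B"
  obtains P where "P \<in> carrier_mat k k"
    "similar_mat (four_block_mat A1 A2 (0\<^sub>m k j) A3) (four_block_mat A1 (A2 * P) (0\<^sub>m k j) B)"
proof -
  obtain P Q where wit: "similar_mat_wit A3 B P Q"
    using \<open>similar_mat A3 B\<close> unfolding similar_mat_def by blast
  then have P: "P \<in> carrier_mat k k" and Q: "Q \<in> carrier_mat k k" and PQ: "P * Q = 1\<^sub>m k"
    using similar_mat_witD2[OF A3] by auto
  have "similar_mat_wit (four_block_mat A1 A2 (0\<^sub>m k j) A3) (four_block_mat A1 (A2 * P) (0\<^sub>m k j) B)
      (four_block_mat (1\<^sub>m j) (0\<^sub>m j k) (0\<^sub>m k j) P) (four_block_mat (1\<^sub>m j) (0\<^sub>m j k) (0\<^sub>m k j) Q)"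
    by (rule similar_mat_wit_four_block[OF similar_mat_wit_refl[OF A1] wit])
      (use A1 A2 A3 P Q PQ in \<open>auto simp: assoc_mult_mat[OF A2 P Q]\<close>)
  then show ?thesis
    using that P unfolding similar_mat_def by blast
qed

lemma triangularizable:
  fixes A :: "'a::alg_closed_field mat"
  assumes "A \<in> carrier_mat n n"
  shows "\<exists>B. B \<in> carrier_mat n n \<and> upper_triangular B \<and> similar_mat A B"
  using assms
proof (induct n arbitrary: A)
  case 0
  then show ?case
    by (intro exI[of _ A]) (auto intro: similar_mat_refl)
next
  case (Suc k A)
  have "degree (char_poly A) = Suc k"
    using degree_monic_char_poly[OF Suc.prems] by auto
  then obtain e where "poly (char_poly A) e = 0"
    using alg_closed_imp_poly_has_root[of "char_poly A"] by auto
  then have "eigenvalue A e"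
    by (simp add: eigenvalue_root_char_poly[OF Suc.prems])
  then obtain A2 A3 where A2: "A2 \<in> carrier_mat 1 k" and A3: "A3 \<in> carrier_mat k k"
    and sim_A: "similar_mat A (four_block_mat (mat 1 1 (\<lambda>_. e)) A2 (0\<^sub>m k 1) A3)"
    using similar_mat_eigenvalue_block[OF Suc.prems] by blast
  obtain B where B: "B \<in> carrier_mat k k" and ut: "upper_triangular B" and "similar_mat A3 B"
    using Suc.hyps[OF A3] by blast
  then obtain P where P: "P \<in> carrier_mat k k"
    and "similar_mat (four_block_mat (mat 1 1 (\<lambda>_. e)) A2 (0\<^sub>m k 1) A3)
      (four_block_mat (mat 1 1 (\<lambda>_. e)) (A2 * P) (0\<^sub>m k 1) B)" (is "similar_mat _ ?C")
    using similar_mat_four_block_lower_right[OF mat_carrier A2 A3] by blast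
  then have "similar_mat A ?C"
    using sim_A similar_mat_trans by blast
  moreover have "upper_triangular ?C"
    using B ut by (intro upper_triangular_four_block) auto
  moreover have "?C \<in> carrier_mat (Suc k) (Suc k)"
    using A2 P B by auto
  ultimately show ?case
    by blast
qed

lemma jordan_nf_exists_alg_closed:
  fixes A :: "'a::alg_closed_field mat"
  assumes "A \<in> carrier_mat n n"
  obtains n_as where "jordan_nf A n_as"
proof -
  obtain B where "B \<in> carrier_mat n n" "upper_triangular B" "similar_mat A B"
    using triangularizable[OF assms] by blast
  then show ?thesis
    using that triangular_to_jnf_vector similar_mat_trans unfolding jordan_nf_def by blast
qed

lemma block_count_jordan_nf:
  fixes A :: "'a::field mat"
  assumes A: "A \<in> carrier_mat n n" and jnf: "jordan_nf A n_as"
  shows "block_count e n_as = kernel_dim (char_matrix A e)"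
proof -
  have "0 \<notin> fst ` set n_as"
    using jnf by (simp add: jordan_nf_def)
  then have "(\<Sum>k \<leftarrow> map fst [(k, a) \<leftarrow> n_as. a = e]. min 1 k) = block_count e n_as"
    by (induct n_as) (auto simp: block_count_def)
  also have "(\<Sum>k \<leftarrow> map fst [(k, a) \<leftarrow> n_as. a = e]. min 1 k) = dim_gen_eigenspace A e 1"
    by (rule dim_gen_eigenspace[OF jnf, symmetric])
  also have "\<dots> = kernel_dim (char_matrix A e)"
    using A by (simp add: dim_gen_eigenspace_def)
  finally show ?thesis ..
qed

lemma block_count_imp_eigenvalue:
  fixes A :: "'a::field mat"
  assumes A: "A \<in> carrier_mat n n" and jnf: "jordan_nf A n_as" and "block_count e n_as \<noteq> 0"
  shows "eigenvalue A e"
proof -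
  obtain k where "(k, e) \<in> set n_as"
    using assms(3) unfolding block_count_def by (auto simp: filter_empty_conv)
  moreover have "0 \<notin> fst ` set n_as"
    using jnf by (simp add: jordan_nf_def)
  ultimately have "0 \<in> set (map (\<lambda>(k, a). (e - a) ^ k) n_as)"
    by (force simp: image_iff)
  then have "poly (\<Prod>(k, a) \<leftarrow> n_as. [:-a, 1:] ^ k) e = 0"
    by (simp add: poly_prod_list o_def case_prod_beta prod_list_zero_iff)
  then show ?thesis
    by (simp add: eigenvalue_root_char_poly[OF A] jordan_nf_char_poly[OF jnf])
qed

lemma finite_eigenvalues:
  fixes A :: "'a::field mat"
  assumes A: "A \<in> carrier_mat n n"
  shows "finite {e. eigenvalue A e}"
proof -
  have "char_poly A \<noteq> 0"
    using degree_monic_char_poly[OF A] by auto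
  then show ?thesis
    using poly_roots_finite by (simp add: eigenvalue_root_char_poly[OF A])
qed

lemma block_count_le_max_geometric_multiplicity:
  fixes A :: "'a::field mat"
  assumes A: "A \<in> carrier_mat n n" and jnf: "jordan_nf A n_as"
  shows "block_count e n_as \<le> Max ((\<lambda>e. kernel_dim (char_matrix A e)) ` {e. eigenvalue A e})"
proof (cases "block_count e n_as = 0")
  case False
  then have "eigenvalue A e"
    by (rule block_count_imp_eigenvalue[OF A jnf])
  then show ?thesis
    using finite_eigenvalues[OF A] by (simp add: block_count_jordan_nf[OF A jnf])
qed simp

lemma jordan_nf_generators:
  fixes A :: "'a::field mat"
  assumes A: "A \<in> carrier_mat n n" and jnf: "jordan_nf A n_as" and count: "\<And>e. block_count e n_as \<le> m"
  obtains g where "\<And>i. i < m \<Longrightarrow> g i \<in> carrier_vec n"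
    and "\<And>w. w \<in> carrier_vec n \<Longrightarrow> \<exists>x\<in>carrier_vec m. poly_comb A g x = w"
proof -
  let ?J = "jordan_matrix n_as" and ?g = "jordan_gens n_as"
  obtain P Q where "similar_mat_wit A ?J P Q"
    using jnf unfolding jordan_nf_def similar_mat_def by blast
  note wit = similar_mat_witD2[OF A this]
  have N: "sum_list (map fst n_as) = n"
    using wit(5) by auto
  have g: "?g i \<in> carrier_vec n" for i
    using jordan_gens_carrier[of n_as i] by (simp add: N)
  have "A * P = P * ?J * (Q * P)"
    using wit by (simp add: assoc_mult_mat[of _ n n _ n _ n])
  then have AP: "A * P = P * ?J"
    using wit right_mult_one_mat[OF mult_carrier_mat[OF wit(6,5)]] by simp
  have "\<exists>x\<in>carrier_vec m. poly_comb A (\<lambda>i. P *\<^sub>v ?g i) x = w" if w: "w \<in> carrier_vec n" for w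
  proof -
    obtain x where x: "x \<in> carrier_vec m" and x_Qw: "poly_comb ?J ?g x = Q *\<^sub>v w"
      using jordan_gens_generate[OF count, of "Q *\<^sub>v w"] w wit(7) N by auto
    have "poly_comb A (\<lambda>i. P *\<^sub>v ?g i) x = P *\<^sub>v (Q *\<^sub>v w)"
      using poly_comb_similar[OF A wit(5,6) AP g] x_Qw by simp
    also have "\<dots> = w"
      using w wit by (simp add: assoc_mult_mat_vec[symmetric, of _ n n _ n])
    finally show ?thesis
      using x by blast
  qed
  then show ?thesis
    using that[of "\<lambda>i. P *\<^sub>v ?g i"] wit(6) g by auto
qed

theorem corollary5p3:
  fixes A :: "'a::alg_closed_field mat" and n m :: nat
  assumes "A \<in> carrier_mat n n"
    and "m = Max ((\<lambda>e. kernel_dim (char_matrix A e)) ` {e. eigenvalue A e})"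
  shows "\<forall>f :: 'a ncpoly.
           is_PI m (\<lambda>c. [:c:]) (carrier_mat m m :: 'a poly mat set) f
           \<longrightarrow> is_PI n (\<lambda>c. c) (centralizer n A) f"
proof (intro allI impI)
  fix f :: "'a ncpoly"
  assume PI: "is_PI m (\<lambda>c. [:c:]) (carrier_mat m m :: 'a poly mat set) f"
  obtain n_as where jnf: "jordan_nf A n_as"
    using jordan_nf_exists_alg_closed[OF assms(1)] .
  have "block_count e n_as \<le> m" for e
    unfolding assms(2) by (rule block_count_le_max_geometric_multiplicity[OF assms(1) jnf])
  then obtain g where "\<And>i. i < m \<Longrightarrow> g i \<in> carrier_vec n"
    and "\<And>w. w \<in> carrier_vec n \<Longrightarrow> \<exists>x\<in>carrier_vec m. poly_comb A g x = w"
    using jordan_nf_generators[OF assms(1) jnf] by blast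
  then show "is_PI n (\<lambda>c. c) (centralizer n A) f"
    using centralizer_is_PI[OF assms(1) _ _ PI] by blast
qed

end
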